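(* Fix real parameters $\ell>0$, $\ell_0\in(0,\ell)$, $\rho>0$, $EI>0$, $m>0$, $\varkappa>0$, $d>0$. Let $s\in\mathbb{C}\setminus\{0\}$ be such that the $4\times4$ matrix $\tilde M=\tilde M(s)$ defined in the context is invertible; write $\tilde M^{-1}=(\tilde M^{-1}_{ij})_{i,j=1}^4$. Let $U\in\mathbb{C}$. Suppose $W:[0,\ell]\to\mathbb{C}$ has restrictions to $[0,\ell_0]$ and $[\ell_0,\ell]$ that are four times continuously differentiable (derivatives at $\ell_0$ one-sided, denoted by arguments $\ell_0\mp 0$), satisfying on $(0,\ell_0)$ and $(\ell_0,\ell)$ $$s^2W(x)+\frac{EI}{\rho}W^{(4)}(x)=0,$$ the boundary conditions $W(0)=W(\ell)=0$, $W''(0)=W''(\ell)=0$, and the interface conditions $W^{(j)}(\ell_0-0)=W^{(j)}(\ell_0+0)$ for $j=0,1,2$ and $$(ms^2+ds+\varkappa)W(\ell_0)=EI\big(W'''(\ell_0-0)-W'''(\ell_0+0)\big)+U.$$ Then for every $\ell_k\in[0,\ell]$ one has $W(\ell_k)=\tilde H_1(s)U$ and $W''(\ell_k)=\tilde H_2(s)U$, where $$\tilde H_1(s)=\begin{cases}\frac1{EI}\Big(\tilde z_2(\ell_k,s)\tilde M^{-1}_{14}+\tilde z_4(\ell_k,s)\tilde M^{-1}_{24}\Big),&\ell_k\in[0,\ell_0],\\[4pt] \frac1{EI}\Big(\tilde z_2(\ell_k-\ell,s)\tilde M^{-1}_{34}+\tilde z_4(\ell_k-\ell,s)\tilde M^{-1}_{44}\Big),&\ell_k\in(\ell_0,\ell],\end{cases}$$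 $$\tilde H_2(s)=\begin{cases}\frac1{EI}\Big(\gamma^4\tilde z_4(\ell_k,s)\tilde M^{-1}_{14}+\tilde z_2(\ell_k,s)\tilde M^{-1}_{24}\Big),&\ell_k\in[0,\ell_0],\\[4pt] \frac1{EI}\Big(\gamma^4\tilde z_4(\ell_k-\ell,s)\tilde M^{-1}_{34}+\tilde z_2(\ell_k-\ell,s)\tilde M^{-1}_{44}\Big),&\ell_k\in(\ell_0,\ell].\end{cases}$$ That is, $\tilde H_1,\tilde H_2$ are the transfer functions of the damped Euler–Bernoulli beam with attached mass, with outputs $w(\ell_k,t)$ and $w''(\ell_k,t)$.
   Context: This is the Laplace transform (zero initial data, Laplace variable $s$) of the simply supported Euler–Bernoulli beam $\ddot w+\frac{EI}{\rho}w^{(4)}=0$ on $[0,\ell]$ with $w=w''=0$ at $x=0,\ell$, continuity of $w,w',w''$ at $\ell_0$, and $(m\ddot w+\varkappa w+d\dot w)|_{x=\ell_0}=EI(w'''|_{\ell_0-0}-w'''|_{\ell_0+0})+F_0$; $W,U$ are the Laplace transforms of $w,F_0$. Parameters: $\rho$ linear density, $EI$ bending stiffness, $m$ attached mass, $\varkappa$ spring stiffness, $d$ damping coefficient. Notation: $\gamma$ is the principal value of $\sqrt[4]{-\rho s^2/(EI)}$, so $\gamma^4=-\rho s^2/(EI)$. For $x\in\mathbb{R}$: $\tilde z_1(x,s)=\cosh\gamma x+\cos\gamma x$, $\tilde z_2(x,s)=\frac1\gamma(\sinh\gamma x+\sin\gamma x)$, $\tilde z_3(x,s)=\frac1{\gamma^2}(\cosh\gamma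 x-\cos\gamma x)$, $\tilde z_4(x,s)=\frac1{\gamma^3}(\sinh\gamma x-\sin\gamma x)$. Let $\tilde v=\frac{ms^2+ds+\varkappa}{EI}$ and write $\tilde z_j^0=\tilde z_j(\ell_0,s)$, $\tilde z_j^-=\tilde z_j(\ell_0-\ell,s)$. The matrix $\tilde M$ has rows Row 1: $\big(\tilde z_2^0,\;\tilde z_4^0,\;-\tilde z_2^-,\;-\tilde z_4^-\big)$; Row 2: $\big(\tilde z_1^0,\;\tilde z_3^0,\;-\tilde z_1^-,\;-\tilde z_3^-\big)$; Row 3: $\big(\gamma^4\tilde z_4^0,\;\tilde z_2^0,\;-\gamma^4\tilde z_4^-,\;-\tilde z_2^-\big)$; Row 4: $\big(\tilde v\tilde z_2^0-\gamma^4\tilde z_3^0,\;\tilde v\tilde z_4^0-\tilde z_1^0,\;\gamma^4\tilde z_3^-,\;\tilde z_1^-\big)$. *)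

theory Defs
  imports "HOL-Analysis.Analysis"
begin

definition gam :: "real \<Rightarrow> real \<Rightarrow> complex \<Rightarrow> complex" where
  "gam rho EI s = (- (complex_of_real rho) * s\<^sup>2 / complex_of_real EI) powr (1/4)"

definition z1 :: "complex \<Rightarrow> real \<Rightarrow> complex" where
  "z1 g x = cosh (g * of_real x) + cos (g * of_real x)"
definition z2 :: "complex \<Rightarrow> real \<Rightarrow> complex" where
  "z2 g x = (sinh (g * of_real x) + sin (g * of_real x)) / g"
definition z3 :: "complex \<Rightarrow> real \<Rightarrow> complex" where
  "z3 g x = (cosh (g * of_real x) - cos (g * of_real x)) / g\<^sup>2"
definition z4 :: "complex \<Rightarrow> real \<Rightarrow> complex" where
  "z4 g x = (sinh (g * of_real x) - sin (g * of_real x)) / g^3"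

text \<open>A 4x4 matrix from its rows; index 4 of type 4 is the fourth element.\<close>
definition mat4 :: "complex list list \<Rightarrow> complex^4^4" where
  "mat4 rs = (\<chi> i j. rs ! (if i = 1 then 0 else if i = 2 then 1 else if i = 3 then 2 else 3)
                             ! (if j = 1 then 0 else if j = 2 then 1 else if j = 3 then 2 else 3))"

definition Mt :: "real \<Rightarrow> real \<Rightarrow> real \<Rightarrow> real \<Rightarrow> real \<Rightarrow> real \<Rightarrow> real \<Rightarrow> complex \<Rightarrow> complex^4^4" where
  "Mt l l0 rho EI m kappa d s =
    (let g = gam rho EI s;
         v = (complex_of_real m * s\<^sup>2 + complex_of_real d * s + complex_of_real kappa) / complex_of_real EI;
         a = l0; b = l0 - l
     in mat4
      [[z2 g a, z4 g a, - z2 g b, - z4 g b],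
       [z1 g a, z3 g a, - z1 g b, - z3 g b],
       [g^4 * z4 g a, z2 g a, - (g^4 * z4 g b), - z2 g b],
       [v * z2 g a - g^4 * z3 g a, v * z4 g a - z1 g a, g^4 * z3 g b, z1 g b]])"

definition H1 :: "real \<Rightarrow> real \<Rightarrow> real \<Rightarrow> real \<Rightarrow> real \<Rightarrow> real \<Rightarrow> real \<Rightarrow> real \<Rightarrow> complex \<Rightarrow> complex" where
  "H1 l l0 rho EI m kappa d lk s =
    (let g = gam rho EI s; Mi = matrix_inv (Mt l l0 rho EI m kappa d s) in
     if lk \<le> l0 then (z2 g lk * Mi$1$4 + z4 g lk * Mi$2$4) / complex_of_real EI
     else (z2 g (lk - l) * Mi$3$4 + z4 g (lk - l) * Mi$4$4) / complex_of_real EI)"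

definition H2 :: "real \<Rightarrow> real \<Rightarrow> real \<Rightarrow> real \<Rightarrow> real \<Rightarrow> real \<Rightarrow> real \<Rightarrow> real \<Rightarrow> complex \<Rightarrow> complex" where
  "H2 l l0 rho EI m kappa d lk s =
    (let g = gam rho EI s; Mi = matrix_inv (Mt l l0 rho EI m kappa d s) in
     if lk \<le> l0 then (g^4 * z4 g lk * Mi$1$4 + z2 g lk * Mi$2$4) / complex_of_real EI
     else (g^4 * z4 g (lk - l) * Mi$3$4 + z2 g (lk - l) * Mi$4$4) / complex_of_real EI)"

end

theory Submission
  imports Defs
begin

text \<open>
  With \<open>g = gam rho EI s\<close> the beam equation on each span reads \<open>W'''' = g^4 W\<close>.
  For two solutions \<open>u\<close>, \<open>y\<close> of this equation the bilinear concomitant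
  \<open>u y''' - u' y'' + u'' y' - u''' y\<close> is constant. Taking for \<open>y\<close> translates of the
  successive derivatives of \<open>z4\<close>, whose values at 0 are \<open>0, 0, 0, 2\<close>, expresses every
  derivative of a solution through its four Cauchy data at any point of its span. At the hinged
  ends \<open>W = W'' = 0\<close>, so on \<open>[0, l0]\<close> the deflection is \<open>W'(0)/2 z2 + W'''(0)/2 z4\<close>,
  and on \<open>[l0, l]\<close> it is the analogous combination centred at \<open>l\<close>. The three continuity
  conditions and the force balance at \<open>l0\<close> say exactly that the vector of these four
  coefficients solves \<open>Mt X = (U/EI) e4\<close>, so it is \<open>U/EI\<close> times the fourth column of the
  inverse of \<open>Mt\<close>.
\<close>

lemma gam_pow_4: "gam rho EI s ^ 4 = - complex_of_real rho * s\<^sup>2 / complex_of_real EI"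
proof (cases "s = 0 \<or> rho = 0 \<or> EI = 0")
  case False
  let ?z = "- complex_of_real rho * s\<^sup>2 / complex_of_real EI"
  have "gam rho EI s = exp (1/4 * ln ?z)"
    using False by (simp add: gam_def powr_def)
  then have "gam rho EI s ^ 4 = exp (of_nat 4 * (1/4 * ln ?z))"
    by (simp only: exp_of_nat_mult)
  also have "\<dots> = ?z"
    using False by simp
  finally show ?thesis .
qed (auto simp: gam_def)

lemma gam_nonzero: "rho \<noteq> 0 \<Longrightarrow> EI \<noteq> 0 \<Longrightarrow> s \<noteq> 0 \<Longrightarrow> gam rho EI s \<noteq> 0"
  by (simp add: gam_def powr_def)

lemma beam_equation_iff:
  assumes "rho \<noteq> 0" "EI \<noteq> 0"
  shows "s\<^sup>2 * w + complex_of_real (EI / rho) * w4 = 0 \<longleftrightarrow> w4 = gam rho EI s ^ 4 * w"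
  using assms unfolding gam_pow_4 by (auto simp: field_simps add_eq_0_iff)

lemma z_has_vector_derivative:
  assumes "g \<noteq> 0"
  shows "(z1 g has_vector_derivative g^4 * z4 g x) (at x)"
    and "(z2 g has_vector_derivative z1 g x) (at x)"
    and "(z3 g has_vector_derivative z2 g x) (at x)"
    and "(z4 g has_vector_derivative z3 g x) (at x)"
  unfolding z1_def z2_def z3_def z4_def using assms
  by (auto intro!: has_vector_derivative_real_field derivative_eq_intros
      simp: field_simps power_eq_if)

fun z4_derivs :: "complex \<Rightarrow> nat \<Rightarrow> real \<Rightarrow> complex" where
  "z4_derivs g 0 = z4 g"
| "z4_derivs g (Suc 0) = z3 g"
| "z4_derivs g (Suc (Suc 0)) = z2 g"
| "z4_derivs g (Suc (Suc (Suc 0))) = z1 g"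
| "z4_derivs g (Suc (Suc (Suc (Suc n)))) = (\<lambda>x. g^4 * z4_derivs g n x)"

lemma z4_derivs_has_vector_derivative:
  "g \<noteq> 0 \<Longrightarrow> (z4_derivs g n has_vector_derivative z4_derivs g (Suc n) x) (at x)"
  by (induction g n arbitrary: x rule: z4_derivs.induct)
    (auto intro: z_has_vector_derivative has_vector_derivative_mult_right)

lemma z4_derivs_add_4: "z4_derivs g (n + 4) x = g^4 * z4_derivs g n x"
  by (simp add: numeral_eq_Suc)

lemma z_at_0 [simp]: "z1 g 0 = 2" "z2 g 0 = 0" "z3 g 0 = 0" "z4 g 0 = 0"
  by (simp_all add: z1_def z2_def z3_def z4_def)

lemma z4_derivs_minus: "z4_derivs g n (- x) = (-1) ^ Suc n * z4_derivs g n x"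
  by (induction g n rule: z4_derivs.induct)
    (simp_all add: z1_def z2_def z3_def z4_def add_divide_distrib diff_divide_distrib)

lemma bilinear_concomitant_constant:
  fixes u y :: "nat \<Rightarrow> real \<Rightarrow> 'a::{real_normed_field, banach}" and G :: 'a
  assumes u': "\<forall>j<4. \<forall>t\<in>{lo..hi}. (u j has_vector_derivative u (Suc j) t) (at t within {lo..hi})"
    and y': "\<forall>j<4. \<forall>t\<in>{lo..hi}. (y j has_vector_derivative y (Suc j) t) (at t within {lo..hi})"
    and u_ode: "\<forall>t\<in>{lo<..<hi}. u 4 t = G * u 0 t"
    and y_ode: "\<forall>t\<in>{lo<..<hi}. y 4 t = G * y 0 t"
    and "p \<in> {lo..hi}" "x \<in> {lo..hi}"
  shows "u 0 x * y 3 x - u 1 x * y 2 x + u 2 x * y 1 x - u 3 x * y 0 x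
       = u 0 p * y 3 p - u 1 p * y 2 p + u 2 p * y 1 p - u 3 p * y 0 p"
proof -
  define B where "B t = u 0 t * y 3 t - u 1 t * y 2 t + u 2 t * y 1 t - u 3 t * y 0 t" for t
  have B': "(B has_vector_derivative u 0 t * y 4 t - u 4 t * y 0 t) (at t within {lo..hi})"
    if t: "t \<in> {lo..hi}" for t
  proof -
    have "(u 0 has_vector_derivative u 1 t) (at t within {lo..hi})"
      "(u 1 has_vector_derivative u 2 t) (at t within {lo..hi})"
      "(u 2 has_vector_derivative u 3 t) (at t within {lo..hi})"
      "(u 3 has_vector_derivative u 4 t) (at t within {lo..hi})"
      "(y 0 has_vector_derivative y 1 t) (at t within {lo..hi})"
      "(y 1 has_vector_derivative y 2 t) (at t within {lo..hi})"
      "(y 2 has_vector_derivative y 3 t) (at t within {lo..hi})"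
      "(y 3 has_vector_derivative y 4 t) (at t within {lo..hi})"
      using u'[rule_format, OF _ t] y'[rule_format, OF _ t] by (simp_all add: numeral_eq_Suc)
    then have "(B has_vector_derivative
        u 0 t * y 4 t + u 1 t * y 3 t - (u 1 t * y 3 t + u 2 t * y 2 t)
        + (u 2 t * y 2 t + u 3 t * y 1 t) - (u 3 t * y 1 t + u 4 t * y 0 t)) (at t within {lo..hi})"
      unfolding B_def by (intro has_vector_derivative_mult has_vector_derivative_add has_vector_derivative_diff)
    then show ?thesis by (simp add: algebra_simps)
  qed
  have "continuous_on {lo..hi} B"
    using B' by (meson continuous_on_eq_continuous_within has_vector_derivative_continuous)
  moreover have "(B has_derivative (\<lambda>h. 0)) (at t within {lo..hi})" if "t \<in> {lo..hi} - {lo, hi}" for t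
    using B'[of t] u_ode y_ode that by (simp add: has_vector_derivative_def)
  ultimately have "B t = B lo" if "t \<in> {lo..hi}" for t
    using that by (intro has_derivative_zero_unique_strong_interval[of "{lo, hi}"]) auto
  then show ?thesis
    using assms(5,6) unfolding B_def by metis
qed

lemma fourth_order_solution_expansion:
  fixes u :: "nat \<Rightarrow> real \<Rightarrow> complex" and g :: complex
  assumes g: "g \<noteq> 0"
    and u': "\<forall>j<4. \<forall>t\<in>{lo..hi}. (u j has_vector_derivative u (Suc j) t) (at t within {lo..hi})"
    and u_ode: "\<forall>t\<in>{lo<..<hi}. u 4 t = g^4 * u 0 t"
    and p: "p \<in> {lo..hi}" and x: "x \<in> {lo..hi}" and k: "k < 4"
  shows "2 * u k x = (\<Sum>i<4. u i p * z4_derivs g (k + 3 - i) (x - p))"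
proof -
  \<comment> \<open>At \<open>t = x\<close> the concomitant of \<open>u\<close> and \<open>y\<close> reduces to \<open>\<plusminus>2 u k x\<close>.\<close>
  define y where "y j t = z4_derivs g (j + k) (t - x)" for j t
  have "(y j has_vector_derivative y (Suc j) t) (at t)" for j t
  proof -
    have "((\<lambda>t. t - x) has_vector_derivative 1) (at t)"
      by (auto intro!: derivative_eq_intros)
    from vector_diff_chain_at[OF this z4_derivs_has_vector_derivative[OF g]]
    show ?thesis unfolding y_def by (simp add: o_def)
  qed
  then have y': "\<forall>j<4. \<forall>t\<in>{lo..hi}. (y j has_vector_derivative y (Suc j) t) (at t within {lo..hi})"
    by (blast intro: has_vector_derivative_at_within)
  have y_ode: "\<forall>t\<in>{lo<..<hi}. y 4 t = g^4 * y 0 t"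
    by (simp add: y_def z4_derivs_add_4 add.commute)
  have y_at_p: "y j p = (-1) ^ Suc (j + k) * z4_derivs g (j + k) (x - p)" for j
    using z4_derivs_minus[of g "j + k" "x - p"] by (simp add: y_def)
  have y_at_x: "y j x = z4_derivs g (j + k) 0" for j
    by (simp add: y_def)
  from bilinear_concomitant_constant[OF u' y' u_ode y_ode p x]
  show ?thesis
    using k by (auto simp: less_Suc_eq numeral_eq_Suc y_at_p y_at_x)
      (simp_all add: algebra_simps minus_equation_iff)
qed

lemma fourth_order_solution_hinged:
  fixes u :: "nat \<Rightarrow> real \<Rightarrow> complex" and g :: complex
  assumes g: "g \<noteq> 0"
    and u': "\<forall>j<4. \<forall>t\<in>{lo..hi}. (u j has_vector_derivative u (Suc j) t) (at t within {lo..hi})"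
    and u_ode: "\<forall>t\<in>{lo<..<hi}. u 4 t = g^4 * u 0 t"
    and p: "p \<in> {lo..hi}" and x: "x \<in> {lo..hi}"
    and hinged: "u 0 p = 0" "u 2 p = 0"
  shows "u 0 x = u 1 p / 2 * z2 g (x - p) + u 3 p / 2 * z4 g (x - p)"
    and "u 1 x = u 1 p / 2 * z1 g (x - p) + u 3 p / 2 * z3 g (x - p)"
    and "u 2 x = u 1 p / 2 * (g^4 * z4 g (x - p)) + u 3 p / 2 * z2 g (x - p)"
    and "u 3 x = u 1 p / 2 * (g^4 * z3 g (x - p)) + u 3 p / 2 * z1 g (x - p)"
  using fourth_order_solution_expansion[OF g u' u_ode p x, of 0]
    fourth_order_solution_expansion[OF g u' u_ode p x, of 1]
    fourth_order_solution_expansion[OF g u' u_ode p x, of 2]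
    fourth_order_solution_expansion[OF g u' u_ode p x, of 3] hinged
  by (simp_all add: numeral_eq_Suc field_simps)

lemma vector_4 [simp]:
  "(vector [a, b, c, e] :: 'a::zero^4) $ 1 = a"
  "(vector [a, b, c, e] :: 'a::zero^4) $ 2 = b"
  "(vector [a, b, c, e] :: 'a::zero^4) $ 3 = c"
  "(vector [a, b, c, e] :: 'a::zero^4) $ 4 = e"
  unfolding vector_def by simp_all

lemma invertible_mult_vec_eq_axis:
  fixes A :: "'a::comm_ring_1^'n^'n"
  assumes "invertible A" "A *v x = axis j c"
  shows "x $ i = matrix_inv A $ i $ j * c"
proof -
  have "matrix_inv A ** A = mat 1"
    using assms(1) unfolding invertible_def matrix_inv_def by (rule someI2_ex) auto
  then have "x = matrix_inv A *v axis j c"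
    by (metis assms(2) matrix_vector_mul_assoc matrix_vector_mul_lid)
  then show ?thesis
    by (simp add: matrix_vector_mult_def axis_def if_distrib cong: if_cong)
qed

lemma Mt_mult_vec_eq_axis:
  fixes l l0 rho EI m kappa d :: real and s a b c e U :: complex
  defines "g \<equiv> gam rho EI s"
    and "v \<equiv> complex_of_real m * s\<^sup>2 + complex_of_real d * s + complex_of_real kappa"
  assumes EI: "EI \<noteq> 0"
    and continuity: "a * z2 g l0 + b * z4 g l0 = c * z2 g (l0 - l) + e * z4 g (l0 - l)"
      "a * z1 g l0 + b * z3 g l0 = c * z1 g (l0 - l) + e * z3 g (l0 - l)"
      "a * (g^4 * z4 g l0) + b * z2 g l0 = c * (g^4 * z4 g (l0 - l)) + e * z2 g (l0 - l)"
    and jump: "v * (a * z2 g l0 + b * z4 g l0)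
         = complex_of_real EI * ((a * (g^4 * z3 g l0) + b * z1 g l0)
                                 - (c * (g^4 * z3 g (l0 - l)) + e * z1 g (l0 - l))) + U"
  shows "Mt l l0 rho EI m kappa d s *v vector [a, b, c, e] = axis 4 (U / complex_of_real EI)"
proof -
  have U: "U = v * (a * z2 g l0 + b * z4 g l0)
      - complex_of_real EI * ((a * (g^4 * z3 g l0) + b * z1 g l0)
                              - (c * (g^4 * z3 g (l0 - l)) + e * z1 g (l0 - l)))"
    using jump by simp
  show ?thesis
    unfolding vec_eq_iff forall_4 matrix_vector_mult_def sum_4 Mt_def mat4_def Let_def axis_def
      g_def[symmetric] v_def[symmetric]
    by (simp add: U EI field_simps) (use continuity in \<open>simp add: algebra_simps\<close>)
qed

theorem proposition2:
  fixes l l0 rho EI m kappa d lk :: real and s U :: complex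
    and W :: "real \<Rightarrow> complex"
    and D1 D2 :: "nat \<Rightarrow> real \<Rightarrow> complex"
  assumes "l > 0" "0 < l0" "l0 < l" "rho > 0" "EI > 0" "m > 0" "kappa > 0" "d > 0"
    and "s \<noteq> 0"
    and "invertible (Mt l l0 rho EI m kappa d s)"
    \<comment> \<open>D1 j / D2 j: j-th derivative of W restricted to [0,l0] / [l0,l], C^4 there\<close>
    and "\<forall>x\<in>{0..l0}. D1 0 x = W x"
    and "\<forall>x\<in>{l0..l}. D2 0 x = W x"
    and "\<forall>j<4. \<forall>x\<in>{0..l0}. (D1 j has_vector_derivative D1 (Suc j) x) (at x within {0..l0})"
    and "\<forall>j<4. \<forall>x\<in>{l0..l}. (D2 j has_vector_derivative D2 (Suc j) x) (at x within {l0..l})"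
    and "continuous_on {0..l0} (D1 4)"
    and "continuous_on {l0..l} (D2 4)"
    and "\<forall>x\<in>{0<..<l0}. s\<^sup>2 * D1 0 x + complex_of_real (EI / rho) * D1 4 x = 0"
    and "\<forall>x\<in>{l0<..<l}. s\<^sup>2 * D2 0 x + complex_of_real (EI / rho) * D2 4 x = 0"
    and "W 0 = 0" "W l = 0" "D1 2 0 = 0" "D2 2 l = 0"
    and "\<forall>j\<le>2. D1 j l0 = D2 j l0"
    and "(complex_of_real m * s\<^sup>2 + complex_of_real d * s + complex_of_real kappa) * W l0
           = complex_of_real EI * (D1 3 l0 - D2 3 l0) + U"
    and "lk \<in> {0..l}"
  shows "W lk = H1 l l0 rho EI m kappa d lk s * U
         \<and> (if lk \<le> l0 then D1 2 lk else D2 2 lk) = H2 l l0 rho EI m kappa d lk s * U"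
proof -
  define g where "g = gam rho EI s"
  have g: "g \<noteq> 0"
    using assms(4,5,9) by (simp add: g_def gam_nonzero)
  have ode: "\<forall>x\<in>{0<..<l0}. D1 4 x = g^4 * D1 0 x" "\<forall>x\<in>{l0<..<l}. D2 4 x = g^4 * D2 0 x"
    using assms(4,5,17,18) by (simp_all add: g_def beam_equation_iff del: of_real_divide)
  \<comment> \<open>\<open>D1 4\<close> and \<open>D2 4\<close> need not be continuous: the concomitant argument uses only derivatives.\<close>
  have ends: "0 \<in> {0..l0}" "D1 0 0 = 0" "l \<in> {l0..l}" "D2 0 l = 0"
    using assms(2,3,11,12,19,20) by auto
  note left = fourth_order_solution_hinged[OF g assms(13) ode(1) ends(1) _ ends(2) assms(21)]
  note right = fourth_order_solution_hinged[OF g assms(14) ode(2) ends(3) _ ends(4) assms(22)]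
  have l0: "l0 \<in> {0..l0}" "l0 \<in> {l0..l}"
    using assms(2,3) by auto
  have interface: "W l0 = D1 0 l0" "D1 0 l0 = D2 0 l0" "D1 1 l0 = D2 1 l0" "D1 2 l0 = D2 2 l0"
    using assms(11,23) l0 by auto
  have "Mt l l0 rho EI m kappa d s *v vector [D1 1 0 / 2, D1 3 0 / 2, D2 1 l / 2, D2 3 l / 2]
        = axis 4 (U / complex_of_real EI)"
    using assms(5,24) interface
    by (intro Mt_mult_vec_eq_axis)
      (simp_all add: left[OF l0(1), simplified] right[OF l0(2), simplified] g_def)
  note coefficient = invertible_mult_vec_eq_axis[OF assms(10) this]
  define Mi where "Mi = matrix_inv (Mt l l0 rho EI m kappa d s)"
  have coefficients: "D1 1 0 = 2 * Mi $ 1 $ 4 * U / EI" "D1 3 0 = 2 * Mi $ 2 $ 4 * U / EI"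
    "D2 1 l = 2 * Mi $ 3 $ 4 * U / EI" "D2 3 l = 2 * Mi $ 4 $ 4 * U / EI"
    using coefficient[of 1] coefficient[of 2] coefficient[of 3] coefficient[of 4]
    by (simp_all add: Mi_def field_simps)
  show ?thesis
  proof (cases "lk \<le> l0")
    case True
    with assms(11,25) left(1,3)[of lk] show ?thesis
      unfolding H1_def H2_def Let_def g_def[symmetric] Mi_def[symmetric] coefficients
      by (simp add: algebra_simps add_divide_distrib)
  next
    case False
    with assms(12,25) right(1,3)[of lk] show ?thesis
      unfolding H1_def H2_def Let_def g_def[symmetric] Mi_def[symmetric] coefficients
      by (simp add: algebra_simps add_divide_distrib)
  qed
qed

end
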